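(* Let $M^1=\langle W^1,\mathcal{N}^1,V^1\rangle$ and $M^2=\langle W^2,\mathcal{N}^2,V^2\rangle$ be nIML1-models and let $w_1\in W^1$, $w_2\in W^2$ be behaviorally equivalent. Then for every formula $\varphi$: $w_1\Vdash_{M^1}\varphi$ iff $w_2\Vdash_{M^2}\varphi$.
   Context: Formulas are built from a denumerable set $PV$ of propositional variables and $\bot$ using binary $\land,\lor,\rightarrow,\rightsquigarrow$ and unary $\Delta$. An nIML1-model is a triple $\langle W,\mathcal{N},V\rangle$ with $W\neq\emptyset$, $\mathcal{N}:W\to P(P(W))$ satisfying for all $w$: (a) $w\in\bigcap\mathcal{N}_w$; (b) $\bigcap\mathcal{N}_w\in\mathcal{N}_w$; (c) $u\in\bigcap\mathcal{N}_w\Rightarrow\bigcap\mathcal{N}_u\subseteq\bigcap\mathcal{N}_w$; (d) $\bigcap\mathcal{N}_w\subseteq X\subseteq\bigcup\mathcal{N}_w\Rightarrow X\in\mathcal{N}_w$; (e) $u\in\bigcap\mathcal{N}_w\Rightarrow\bigcup\mathcal{N}_u\subseteq\bigcup\mathcal{N}_w$ ($\bigcap\mathcal{N}_w$, $\bigcup\mathcal{N}_w$ the intersection and union of the family $\mathcal{N}_w$), and $V:PV\to P(W)$ with $w\in V(q)\Rightarrow\bigcap\mathcal{N}_w\subseteq V(q)$. Forcing: atoms via $V$; $\bot$ never; $\land,\lor$ pointwise; $w\Vdash\varphi\rightarrow\psi$ iff every $v\in\bigcap\mathcal{N}_w$ has $v\nVdash\varphi$ or $v\Vdash\psi$; $w\Vdash\varphi\rightsquigarrow\psi$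 iff every $v\in\bigcup\mathcal{N}_w$ has $v\nVdash\varphi$ or $v\Vdash\psi$; $w\Vdash\Delta\varphi$ iff every $v\in\bigcup\mathcal{N}_w$ has $v\Vdash\varphi$. A bounded morphism from $M^1$ to $M^2$ is $f:W^1\to W^2$ such that for every $w$: $w$ and $f(w)$ force the same propositional variables, $f[\bigcap\mathcal{N}^1_w]=\bigcap\mathcal{N}^2_{f(w)}$ and $f[\bigcup\mathcal{N}^1_w]=\bigcup\mathcal{N}^2_{f(w)}$. Worlds $w_1\in W^1$, $w_2\in W^2$ are behaviorally equivalent if there exist an nIML1-model $B$ and bounded morphisms $f:M^1\to B$, $g:M^2\to B$ with $f(w_1)=g(w_2)$. *)

theory Defs
  imports Main
begin

datatype fm =
    Var nat
  | Bot
  | And fm fm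
  | Or fm fm
  | Imp fm fm
  | SImp fm fm
  | Delta fm

record 'w model =
  W :: "'w set"
  N :: "'w \<Rightarrow> 'w set set"
  V :: "nat \<Rightarrow> 'w set"

definition core :: "'w model \<Rightarrow> 'w \<Rightarrow> 'w set" where
  "core M w = \<Inter> (N M w)"

definition sky :: "'w model \<Rightarrow> 'w \<Rightarrow> 'w set" where
  "sky M w = \<Union> (N M w)"

definition nIML1_model :: "'w model \<Rightarrow> bool" where
  "nIML1_model M \<longleftrightarrow>
     W M \<noteq> {} \<and>
     (\<forall>w \<in> W M. N M w \<subseteq> Pow (W M)) \<and>
     (\<forall>w \<in> W M.
        w \<in> core M w \<and>
        core M w \<in> N M w \<and>
        (\<forall>u \<in> core M w. core M u \<subseteq> core M w) \<and>
        (\<forall>X. core M w \<subseteq> X \<and> X \<subseteq> sky M w \<longrightarrow> X \<in> N M w) \<and>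
        (\<forall>u \<in> core M w. sky M u \<subseteq> sky M w)) \<and>
     (\<forall>q. V M q \<subseteq> W M) \<and>
     (\<forall>q. \<forall>w \<in> V M q. core M w \<subseteq> V M q)"

fun forces :: "'w model \<Rightarrow> 'w \<Rightarrow> fm \<Rightarrow> bool" where
  "forces M w (Var q) = (w \<in> V M q)"
| "forces M w Bot = False"
| "forces M w (And a b) = (forces M w a \<and> forces M w b)"
| "forces M w (Or a b) = (forces M w a \<or> forces M w b)"
| "forces M w (Imp a b) = (\<forall>v \<in> core M w. \<not> forces M v a \<or> forces M v b)"
| "forces M w (SImp a b) = (\<forall>v \<in> sky M w. \<not> forces M v a \<or> forces M v b)"
| "forces M w (Delta a) = (\<forall>v \<in> sky M w. forces M v a)"

definition bounded_morphism :: "'a model \<Rightarrow> 'b model \<Rightarrow> ('a \<Rightarrow> 'b) \<Rightarrow> bool" where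
  "bounded_morphism M1 M2 f \<longleftrightarrow>
     f ` W M1 \<subseteq> W M2 \<and>
     (\<forall>w \<in> W M1.
        (\<forall>q. w \<in> V M1 q \<longleftrightarrow> f w \<in> V M2 q) \<and>
        f ` core M1 w = core M2 (f w) \<and>
        f ` sky M1 w = sky M2 (f w))"

definition behav_equiv ::
  "'a model \<Rightarrow> 'a \<Rightarrow> 'b model \<Rightarrow> 'b \<Rightarrow> 'c model \<Rightarrow> bool" where
  "behav_equiv M1 w1 M2 w2 B \<longleftrightarrow>
     nIML1_model B \<and>
     (\<exists>f g. bounded_morphism M1 B f \<and> bounded_morphism M2 B g \<and> f w1 = g w2)"

end

theory Submission
  imports Defs
begin

text \<open>Bounded morphisms preserve and reflect truth, by induction on the formula; both worlds
  are then sent to the same world of the intermediate model.\<close>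

lemma nIML1_model_core_subset:
  assumes "nIML1_model M" and "w \<in> W M"
  shows "core M w \<subseteq> W M"
proof -
  have "N M w \<subseteq> Pow (W M)" and "core M w \<in> N M w"
    using assms unfolding nIML1_model_def by auto
  then show ?thesis by blast
qed

lemma nIML1_model_sky_subset:
  assumes "nIML1_model M" and "w \<in> W M"
  shows "sky M w \<subseteq> W M"
proof -
  have "N M w \<subseteq> Pow (W M)"
    using assms unfolding nIML1_model_def by auto
  then show ?thesis unfolding sky_def by blast
qed

lemma forces_bounded_morphism:
  assumes "nIML1_model M" and "bounded_morphism M B f" and "w \<in> W M"
  shows "forces B (f w) \<phi> \<longleftrightarrow> forces M w \<phi>"
  using assms(3)
proof (induction \<phi> arbitrary: w)
  case (Var q)
  then show ?case using assms(2) unfolding bounded_morphism_def by simp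
next
  case (Imp a b)
  have "core B (f w) = f ` core M w"
    using assms(2) Imp.prems unfolding bounded_morphism_def by simp
  then show ?case
    using Imp.IH nIML1_model_core_subset[OF assms(1) Imp.prems] by (simp add: subset_iff)
next
  case (SImp a b)
  have "sky B (f w) = f ` sky M w"
    using assms(2) SImp.prems unfolding bounded_morphism_def by simp
  then show ?case
    using SImp.IH nIML1_model_sky_subset[OF assms(1) SImp.prems] by (simp add: subset_iff)
next
  case (Delta a)
  have "sky B (f w) = f ` sky M w"
    using assms(2) Delta.prems unfolding bounded_morphism_def by simp
  then show ?case
    using Delta.IH nIML1_model_sky_subset[OF assms(1) Delta.prems] by (simp add: subset_iff)
qed simp_all

theorem theorem7p2:
  fixes M1 :: "'a model" and M2 :: "'b model" and B :: "'c model"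
  assumes "nIML1_model M1" and "nIML1_model M2"
    and "w1 \<in> W M1" and "w2 \<in> W M2"
    and "behav_equiv M1 w1 M2 w2 B"
  shows "forces M1 w1 \<phi> \<longleftrightarrow> forces M2 w2 \<phi>"
proof -
  obtain f g where f: "bounded_morphism M1 B f" and g: "bounded_morphism M2 B g"
    and same: "f w1 = g w2"
    using assms(5) unfolding behav_equiv_def by blast
  have "forces M1 w1 \<phi> \<longleftrightarrow> forces B (f w1) \<phi>"
    using forces_bounded_morphism[OF assms(1) f assms(3)] by simp
  also have "\<dots> \<longleftrightarrow> forces M2 w2 \<phi>"
    using forces_bounded_morphism[OF assms(2) g assms(4)] same by simp
  finally show ?thesis .
qed

end
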